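(* Let $\mathbf P=(P,\leq,{}',0,1)$ be a bounded poset with a unary operation $'$ and let $(P,\sqcup,{}',0,1)$ be an algebra assigned to $\mathbf P$. Then $\mathbf P$ is a generalized orthomodular poset if and only if the following hold: (i) for all $x,y,z\in P$: if $(x\sqcup z)\sqcup(((x'\sqcap w)\sqcap((x\sqcup y)\sqcap w))\sqcup z)=z$ for all $w\in P$, then $(x\sqcup y)\sqcup z=z$; (ii) $(x\sqcap y)\sqcup x=x$ for all $x,y\in P$; (iii) $(x\sqcup y)\sqcup(x'\sqcup y)=1$ for all $x,y\in P$; (iv) $x''=x$ for all $x\in P$.
   Context: For a poset and $A\subseteq P$: $L(A)$ is the set of lower bounds of $A$, $U(A)$ the set of upper bounds; $L(a,b)=L(\{a,b\})$, $U(a,B)=U(\{a\}\cup B)$, etc. An orthoposet is a bounded poset $(P,\leq,{}',0,1)$ with a unary operation $'$ that is an antitone involution ($x''=x$; $x\leq y\Rightarrow y'\leq x'$) and a complementation ($L(x,x')=\{0\}$, $U(x,x')=\{1\}$). A generalized orthomodular poset is an orthoposet such that for all $x,y$, $x\leq y$ implies $U(y)=U(x,L(x',y))$. An algebra assigned to a bounded poset with unary operation $\mathbf P=(P,\leq,{}',0,1)$ is an algebra $(P,\sqcup,{}',0,1)$ of type $(2,1,0,0)$ (same $'$, $0$, $1$) such that for all $x,y\in P$: $x\sqcup y=y$ whenever $x\leq y$, and $x\sqcup y=y\sqcup x\in U(x,y)$. We write $x\sqcap y:=(x'\sqcup y')'$. *)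

theory Defs
  imports Main
begin

definition lbs :: "('a \<Rightarrow> 'a \<Rightarrow> bool) \<Rightarrow> 'a set \<Rightarrow> 'a set" where
  "lbs le A = {x. \<forall>a\<in>A. le x a}"

definition ubs :: "('a \<Rightarrow> 'a \<Rightarrow> bool) \<Rightarrow> 'a set \<Rightarrow> 'a set" where
  "ubs le A = {x. \<forall>a\<in>A. le a x}"

definition bounded_poset :: "('a \<Rightarrow> 'a \<Rightarrow> bool) \<Rightarrow> 'a \<Rightarrow> 'a \<Rightarrow> bool" where
  "bounded_poset le zero one \<longleftrightarrow>
     (\<forall>x. le x x) \<and> (\<forall>x y. le x y \<and> le y x \<longrightarrow> x = y) \<and>
     (\<forall>x y z. le x y \<and> le y z \<longrightarrow> le x z) \<and>
     (\<forall>x. le zero x \<and> le x one)"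

definition orthoposet :: "('a \<Rightarrow> 'a \<Rightarrow> bool) \<Rightarrow> ('a \<Rightarrow> 'a) \<Rightarrow> 'a \<Rightarrow> 'a \<Rightarrow> bool" where
  "orthoposet le c zero one \<longleftrightarrow>
     bounded_poset le zero one \<and>
     (\<forall>x. c (c x) = x) \<and> (\<forall>x y. le x y \<longrightarrow> le (c y) (c x)) \<and>
     (\<forall>x. lbs le {x, c x} = {zero} \<and> ubs le {x, c x} = {one})"

definition gen_orthomodular_poset :: "('a \<Rightarrow> 'a \<Rightarrow> bool) \<Rightarrow> ('a \<Rightarrow> 'a) \<Rightarrow> 'a \<Rightarrow> 'a \<Rightarrow> bool" where
  "gen_orthomodular_poset le c zero one \<longleftrightarrow>
     orthoposet le c zero one \<and>
     (\<forall>x y. le x y \<longrightarrow> ubs le {y} = ubs le ({x} \<union> lbs le {c x, y}))"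

text \<open>An algebra (P, join, c, zero, one) assigned to the bounded poset with unary operation
  (P, le, c, zero, one); it shares c, zero, one.\<close>
definition assigned_algebra :: "('a \<Rightarrow> 'a \<Rightarrow> bool) \<Rightarrow> ('a \<Rightarrow> 'a \<Rightarrow> 'a) \<Rightarrow> bool" where
  "assigned_algebra le join \<longleftrightarrow>
     (\<forall>x y. le x y \<longrightarrow> join x y = y) \<and>
     (\<forall>x y. join x y = join y x \<and> join x y \<in> ubs le {x, y})"

definition ameet :: "('a \<Rightarrow> 'a \<Rightarrow> 'a) \<Rightarrow> ('a \<Rightarrow> 'a) \<Rightarrow> 'a \<Rightarrow> 'a \<Rightarrow> 'a" where
  "ameet join c x y = c (join (c x) (c y))"

end

theory Submission
  imports Defs
begin

text \<open>In an assigned algebra \<open>x \<squnion> y = y\<close> holds exactly when \<open>x \<le> y\<close>, so every equation of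
  the characterization is an order statement in disguise. Condition (ii) makes \<open>x \<sqinter> y\<close> a lower
  bound of \<open>x\<close>, which together with (iv) makes \<open>'\<close> an antitone involution; (iii) says that
  every common upper bound of \<open>x\<close> and \<open>x'\<close> is \<open>1\<close>, and dually every common lower bound is \<open>0\<close>.
  Finally, since \<open>(x' \<sqinter> w) \<sqinter> ((x \<squnion> y) \<sqinter> w) = w\<close> whenever \<open>w\<close> is a lower bound of \<open>x'\<close> and
  \<open>x \<squnion> y\<close>, the premise of (i) says precisely that \<open>z \<in> U(x, L(x', x \<squnion> y))\<close>, and (i) is the
  generalized orthomodular law for the pair \<open>x \<le> x \<squnion> y\<close>.\<close>

locale bounded_poset_algebra =
  fixes le :: "'a \<Rightarrow> 'a \<Rightarrow> bool" and join :: "'a \<Rightarrow> 'a \<Rightarrow> 'a" and zero one :: 'a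
  assumes bounded: "bounded_poset le zero one"
    and assigned: "assigned_algebra le join"
begin

lemma le_refl: "le x x"
  and le_antisym: "le x y \<Longrightarrow> le y x \<Longrightarrow> x = y"
  and le_trans: "le x y \<Longrightarrow> le y z \<Longrightarrow> le x z"
  and zero_le: "le zero x"
  and le_one: "le x one"
  using bounded unfolding bounded_poset_def by blast+

lemma join_upper1: "le x (join x y)"
  and join_upper2: "le y (join x y)"
  and join_commute: "join x y = join y x"
  using assigned unfolding assigned_algebra_def ubs_def by auto

lemma join_eq_right_iff: "join x y = y \<longleftrightarrow> le x y"
  using assigned join_upper1 unfolding assigned_algebra_def by metis

lemma join_idem: "join x x = x"
  using join_eq_right_iff le_refl by blast

lemma join_join_eq_iff: "join (join x z) (join s z) = z \<longleftrightarrow> le x z \<and> le s z"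
proof
  assume "join (join x z) (join s z) = z"
  then have "le (join x z) z" "le (join s z) z"
    using join_upper1 join_upper2 by metis+
  then show "le x z \<and> le s z"
    using join_upper1 le_trans by blast
next
  assume "le x z \<and> le s z"
  then have "join x z = z" "join s z = z"
    using join_eq_right_iff by blast+
  then show "join (join x z) (join s z) = z"
    using join_idem by simp
qed

lemma ubs_compl_eq_one_iff:
  "(\<forall>x y. join (join x y) (join (c x) y) = one) \<longleftrightarrow> (\<forall>x. ubs le {x, c x} = {one})"
proof
  assume join_one: "\<forall>x y. join (join x y) (join (c x) y) = one"
  show "\<forall>x. ubs le {x, c x} = {one}"
  proof (intro allI set_eqI iffI)
    fix x u
    assume "u \<in> ubs le {x, c x}"
    then have "join x u = u" "join (c x) u = u"
      unfolding ubs_def by (simp_all add: join_eq_right_iff)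
    moreover have "join (join x u) (join (c x) u) = one"
      using join_one by blast
    ultimately show "u \<in> {one}"
      by (simp add: join_idem)
  next
    fix x u
    assume "u \<in> {one}"
    then show "u \<in> ubs le {x, c x}"
      by (simp add: ubs_def le_one)
  qed
next
  assume ubs_one: "\<forall>x. ubs le {x, c x} = {one}"
  show "\<forall>x y. join (join x y) (join (c x) y) = one"
  proof (intro allI)
    fix x y
    have "join (join x y) (join (c x) y) \<in> ubs le {x, c x}"
      unfolding ubs_def using join_upper1 join_upper2 le_trans by blast
    then show "join (join x y) (join (c x) y) = one"
      using ubs_one by blast
  qed
qed

lemma ameet_commute: "ameet join c x y = ameet join c y x"
  unfolding ameet_def using join_commute by metis

lemma antitone_if_ameet_lower:
  assumes "\<And>x. c (c x) = x" and "\<And>x y. le (ameet join c x y) x" and "le x y"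
  shows "le (c y) (c x)"
proof -
  have "ameet join c (c x) (c y) = c y"
    unfolding ameet_def using assms(1,3) join_eq_right_iff by metis
  then show ?thesis
    using assms(2) by metis
qed

lemma gom_law_iff_join_form:
  "(\<forall>x y. le x y \<longrightarrow> ubs le {y} = ubs le ({x} \<union> lbs le {c x, y})) \<longleftrightarrow>
   (\<forall>x y z. z \<in> ubs le ({x} \<union> lbs le {c x, join x y}) \<longrightarrow> le (join x y) z)"
proof
  assume law: "\<forall>x y. le x y \<longrightarrow> ubs le {y} = ubs le ({x} \<union> lbs le {c x, y})"
  show "\<forall>x y z. z \<in> ubs le ({x} \<union> lbs le {c x, join x y}) \<longrightarrow> le (join x y) z"
  proof (intro allI impI)
    fix x y z
    assume "z \<in> ubs le ({x} \<union> lbs le {c x, join x y})"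
    then have "z \<in> ubs le {join x y}"
      using law[rule_format, OF join_upper1] by simp
    then show "le (join x y) z"
      by (simp add: ubs_def)
  qed
next
  assume law: "\<forall>x y z. z \<in> ubs le ({x} \<union> lbs le {c x, join x y}) \<longrightarrow> le (join x y) z"
  show "\<forall>x y. le x y \<longrightarrow> ubs le {y} = ubs le ({x} \<union> lbs le {c x, y})"
  proof (intro allI impI set_eqI iffI)
    fix x y z
    assume "le x y" and "z \<in> ubs le ({x} \<union> lbs le {c x, y})"
    moreover have "join x y = y"
      using \<open>le x y\<close> join_eq_right_iff by blast
    ultimately show "z \<in> ubs le {y}"
      using law[rule_format, of z x y] unfolding ubs_def by simp
  next
    fix x y z
    assume "le x y" and "z \<in> ubs le {y}"
    then show "z \<in> ubs le ({x} \<union> lbs le {c x, y})"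
      unfolding ubs_def lbs_def using le_trans by auto
  qed
qed

end

locale antitone_involution = bounded_poset_algebra +
  fixes c :: "'a \<Rightarrow> 'a"
  assumes compl_compl: "c (c x) = x"
    and compl_antitone: "le x y \<Longrightarrow> le (c y) (c x)"
begin

lemma ameet_eq_right: "le y x \<Longrightarrow> ameet join c x y = y"
  unfolding ameet_def using compl_antitone join_eq_right_iff compl_compl by metis

lemma ameet_lower1: "le (ameet join c x y) x"
  unfolding ameet_def using compl_antitone[OF join_upper1] compl_compl by metis

lemma join_ameet_left: "join (ameet join c x y) x = x"
  using ameet_lower1 join_eq_right_iff by blast

lemma ameet_lower2: "le (ameet join c x y) y"
  using ameet_lower1 ameet_commute by metis

lemma compl_one: "c one = zero"
  using compl_antitone[OF le_one, of "c zero"] compl_compl le_antisym zero_le by metis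

lemma lbs_compl_eq_zero:
  assumes "ubs le {x, c x} = {one}"
  shows "lbs le {x, c x} = {zero}"
proof (intro set_eqI iffI)
  fix v
  assume "v \<in> lbs le {x, c x}"
  then have "le v x" "le v (c x)"
    unfolding lbs_def by simp_all
  then have "le (c x) (c v)" "le x (c v)"
    using compl_antitone[of v] compl_compl by metis+
  then have "c v = one"
    using assms unfolding ubs_def by blast
  then have "v = zero"
    using compl_one compl_compl by metis
  then show "v \<in> {zero}"
    by simp
qed (auto simp: lbs_def zero_le)

lemma condition_i_premise_iff:
  "(\<forall>w. join (join x z)
          (join (ameet join c (ameet join c (c x) w) (ameet join c (join x y) w)) z) = z) \<longleftrightarrow>
   z \<in> ubs le ({x} \<union> lbs le {c x, join x y})"
proof
  assume premise: "\<forall>w. join (join x z)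
          (join (ameet join c (ameet join c (c x) w) (ameet join c (join x y) w)) z) = z"
  have "le v z" if "v \<in> lbs le {c x, join x y}" for v
  proof -
    have "ameet join c (ameet join c (c x) v) (ameet join c (join x y) v) = v"
      using that unfolding lbs_def by (simp add: ameet_eq_right le_refl)
    then show ?thesis
      using premise[rule_format, of v] join_join_eq_iff by simp
  qed
  moreover have "le x z"
    using premise join_join_eq_iff by blast
  ultimately show "z \<in> ubs le ({x} \<union> lbs le {c x, join x y})"
    unfolding ubs_def by blast
next
  assume z: "z \<in> ubs le ({x} \<union> lbs le {c x, join x y})"
  show "\<forall>w. join (join x z)
          (join (ameet join c (ameet join c (c x) w) (ameet join c (join x y) w)) z) = z"
  proof
    fix w
    let ?s = "ameet join c (ameet join c (c x) w) (ameet join c (join x y) w)"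
    have "?s \<in> lbs le {c x, join x y}"
      unfolding lbs_def
      using le_trans[OF ameet_lower1 ameet_lower1] le_trans[OF ameet_lower2 ameet_lower1] by auto
    then show "join (join x z) (join ?s z) = z"
      using z join_join_eq_iff unfolding ubs_def by blast
  qed
qed

lemma condition_i_iff_gom_law:
  "(\<forall>x y z. (\<forall>w. join (join x z)
                  (join (ameet join c (ameet join c (c x) w) (ameet join c (join x y) w)) z) = z)
              \<longrightarrow> join (join x y) z = z) \<longleftrightarrow>
   (\<forall>x y z. z \<in> ubs le ({x} \<union> lbs le {c x, join x y}) \<longrightarrow> le (join x y) z)"
  by (simp only: condition_i_premise_iff join_eq_right_iff)

end

context bounded_poset_algebra
begin

lemma gen_orthomodular_poset_iff:
  "gen_orthomodular_poset le c zero one \<longleftrightarrow>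
     (\<forall>x. c (c x) = x) \<and> (\<forall>x y. le x y \<longrightarrow> le (c y) (c x)) \<and>
     (\<forall>x. ubs le {x, c x} = {one}) \<and>
     (\<forall>x y z. z \<in> ubs le ({x} \<union> lbs le {c x, join x y}) \<longrightarrow> le (join x y) z)"
proof -
  have "lbs le {x, c x} = {zero}"
    if "\<forall>x. c (c x) = x" "\<forall>x y. le x y \<longrightarrow> le (c y) (c x)" "ubs le {x, c x} = {one}" for x
  proof -
    interpret antitone_involution le join zero one c
      using that(1,2) by unfold_locales blast+
    show ?thesis
      using that(3) by (rule lbs_compl_eq_zero)
  qed
  then show ?thesis
    unfolding gen_orthomodular_poset_def orthoposet_def gom_law_iff_join_form
    using bounded by auto
qed

lemma join_conditions_iff_order_conditions:
  "(\<forall>x y z. (\<forall>w. join (join x z)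
                  (join (ameet join c (ameet join c (c x) w) (ameet join c (join x y) w)) z) = z)
              \<longrightarrow> join (join x y) z = z) \<and>
    (\<forall>x y. join (ameet join c x y) x = x) \<and>
    (\<forall>x y. join (join x y) (join (c x) y) = one) \<and>
    (\<forall>x. c (c x) = x)
   \<longleftrightarrow>
     (\<forall>x. c (c x) = x) \<and> (\<forall>x y. le x y \<longrightarrow> le (c y) (c x)) \<and>
     (\<forall>x. ubs le {x, c x} = {one}) \<and>
     (\<forall>x y z. z \<in> ubs le ({x} \<union> lbs le {c x, join x y}) \<longrightarrow> le (join x y) z)"
  (is "?i \<and> ?ii \<and> ?iii \<and> ?iv \<longleftrightarrow> ?inv \<and> ?anti \<and> ?ubs \<and> ?gom")
proof
  assume conds: "?i \<and> ?ii \<and> ?iii \<and> ?iv"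
  then have ?inv and "\<And>x y. le (ameet join c x y) x"
    using join_eq_right_iff by blast+
  then have ?anti
    using antitone_if_ameet_lower by blast
  interpret antitone_involution le join zero one c
    using \<open>?inv\<close> \<open>?anti\<close> by unfold_locales blast+
  show "?inv \<and> ?anti \<and> ?ubs \<and> ?gom"
    using conds \<open>?inv\<close> \<open>?anti\<close> ubs_compl_eq_one_iff[of c] condition_i_iff_gom_law by blast
next
  assume props: "?inv \<and> ?anti \<and> ?ubs \<and> ?gom"
  then interpret antitone_involution le join zero one c
    by unfold_locales blast+
  show "?i \<and> ?ii \<and> ?iii \<and> ?iv"
    using props join_ameet_left ubs_compl_eq_one_iff[of c] condition_i_iff_gom_law by blast
qed

end

theorem theorem2:
  fixes le :: "'a \<Rightarrow> 'a \<Rightarrow> bool" and c :: "'a \<Rightarrow> 'a" and zero one :: 'a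
    and join :: "'a \<Rightarrow> 'a \<Rightarrow> 'a"
  assumes "bounded_poset le zero one"
    and "assigned_algebra le join"
  shows "gen_orthomodular_poset le c zero one \<longleftrightarrow>
    (\<forall>x y z. (\<forall>w. join (join x z)
                  (join (ameet join c (ameet join c (c x) w) (ameet join c (join x y) w)) z) = z)
              \<longrightarrow> join (join x y) z = z) \<and>
    (\<forall>x y. join (ameet join c x y) x = x) \<and>
    (\<forall>x y. join (join x y) (join (c x) y) = one) \<and>
    (\<forall>x. c (c x) = x)"
proof -
  interpret bounded_poset_algebra le join zero one
    using assms by unfold_locales
  show ?thesis
    unfolding gen_orthomodular_poset_iff join_conditions_iff_order_conditions ..
qed

end
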